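(* Fix $\kappa>0$ and $0<L<U<\infty$; let $a=(1+U)^{-1}$, $b=(1+L)^{-1}$, $I=[a,b]$, $z_0=(a+b)/2$, $\Delta=(b-a)/2$. For a measurable $\psi:[0,\infty)\to\mathbb R$ with $\|\psi\|_\infty\le1$, let $T_\psi(z)=\int_0^\infty\psi(\theta)\frac{\theta^{\kappa-1}}{\Gamma(\kappa)}\left(\frac{1-z}{z}\right)^\kappa e^{-\theta(1-z)/z}d\theta$ for $z\in I$, $R_\psi(z)=(1-z)^{-\kappa}T_\psi(z)$, and $q_\psi(u)=R_\psi(z_0+\Delta u)$ for $u\in[-1,1]$. Then there exist a constant $C>0$ depending only on $(\kappa,L,U)$ and a constant $\rho\in(0,1)$ depending only on $(L,U)$ such that, for every integer $m\ge2$ and every such $\psi$, there is a polynomial $p_{m,\psi}(u)=\sum_{j=0}^m d^{(m)}_{\psi,j}u^j$ of degree at most $m$ satisfying $$\sup_{u\in[-1,1]}|q_\psi(u)-p_{m,\psi}(u)|\le C\rho^m\qquad\text{and}\qquad|d^{(m)}_{\psi,j}|\le C\frac{m^j}{j!},\quad j=0,\dots,m.$$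
   Context: $\|\psi\|_\infty$ is the supremum norm. *)

theory Defs
  imports "HOL-Analysis.Analysis"
begin

definition endA :: "real \<Rightarrow> real" where "endA U = 1 / (1 + U)"
definition endB :: "real \<Rightarrow> real" where "endB L = 1 / (1 + L)"
definition zc :: "real \<Rightarrow> real \<Rightarrow> real" where "zc L U = (endA U + endB L) / 2"
definition halfw :: "real \<Rightarrow> real \<Rightarrow> real" where "halfw L U = (endB L - endA U) / 2"

definition T_psi :: "real \<Rightarrow> (real \<Rightarrow> real) \<Rightarrow> real \<Rightarrow> real" where
  "T_psi \<kappa> \<psi> z = (LINT \<theta>:{0..}|lborel.
      \<psi> \<theta> * (\<theta> powr (\<kappa> - 1) / Gamma \<kappa>) * ((1 - z) / z) powr \<kappa> * exp (- \<theta> * (1 - z) / z))"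

definition R_psi :: "real \<Rightarrow> (real \<Rightarrow> real) \<Rightarrow> real \<Rightarrow> real" where
  "R_psi \<kappa> \<psi> z = (1 - z) powr (- \<kappa>) * T_psi \<kappa> \<psi> z"

definition q_psi :: "real \<Rightarrow> real \<Rightarrow> real \<Rightarrow> (real \<Rightarrow> real) \<Rightarrow> real \<Rightarrow> real" where
  "q_psi \<kappa> L U \<psi> u = R_psi \<kappa> \<psi> (zc L U + halfw L U * u)"

end

theory Submission
  imports Defs "HOL-Complex_Analysis.Complex_Analysis"
begin

text \<open>
  For 0 < z < 1 the integrand of R_psi is psi(theta) k(theta, z) with
  k(theta, z) = theta^(kappa-1) / Gamma(kappa) * z^(-kappa) * exp (-theta (1 - z) / z),
  because (1 - z)^(-kappa) ((1 - z) / z)^kappa = z^(-kappa); and k(theta, -) is holomorphic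
  on Re z > 0. The interval [a, b] lies strictly inside the disc |z - 1/2| < 1/2, so for some
  r > 1 depending only on L and U the map u \<mapsto> z0 + Delta u sends the disc |u| \<le> r into a
  disc |z - 1/2| \<le> s < 1/2. There |z| \<ge> 1/2 - s and Re (1/z) \<ge> 1 + (1/4 - s^2), so |k(theta, z)|
  is dominated by the integrable Gamma-type function
  h(theta) = theta^(kappa-1) (1/2 - s)^(-kappa) exp (-(1/4 - s^2) theta) / Gamma(kappa).
  Cauchy's estimates for u \<mapsto> k(theta, z0 + Delta u) bound its Taylor coefficients at 0 by
  h(theta) r^(-j) and its Taylor remainder on [-1, 1] by h(theta) r^(-m) / (r - 1); integrating
  against psi gives the polynomial, with rho = 1/r. The coefficient bound is then crude:
  |d_j| \<le> (integral of h) \<le> C and j! \<le> m^j for j \<le> m.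
\<close>

section \<open>Cauchy estimates for holomorphic families\<close>

lemma Taylor_coefficient_bound:
  fixes f :: "complex \<Rightarrow> complex"
  assumes hol: "f holomorphic_on ball 0 R" and r: "0 < r" "r < R"
    and bound: "\<And>z. norm z \<le> r \<Longrightarrow> norm (f z) \<le> B"
  shows "norm ((deriv ^^ j) f 0 / fact j) \<le> B / r ^ j"
proof -
  have "norm ((deriv ^^ j) f 0) \<le> fact j * B / r ^ j"
  proof (rule Cauchy_inequality)
    show "f holomorphic_on ball 0 r"
      using hol by (rule holomorphic_on_subset) (use r in auto)
    show "continuous_on (cball 0 r) f"
      using holomorphic_on_imp_continuous_on[OF hol] by (rule continuous_on_subset) (use r in auto)
  qed (use r bound in auto)
  then show ?thesis
    by (simp add: norm_divide field_simps)
qed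

lemma Taylor_remainder_bound:
  fixes f :: "complex \<Rightarrow> complex"
  assumes hol: "f holomorphic_on ball 0 R" and r: "1 < r" "r < R"
    and bound: "\<And>z. norm z \<le> r \<Longrightarrow> norm (f z) \<le> B"
    and u: "norm u \<le> 1"
  shows "norm (f u - (\<Sum>j\<le>m. (deriv ^^ j) f 0 / fact j * u ^ j)) \<le> B / (r ^ m * (r - 1))"
proof -
  define a where "a n = (deriv ^^ n) f 0 / fact n * u ^ n" for n
  have "a sums f u"
    using holomorphic_power_series[OF hol, of u] u r by (simp add: a_def[abs_def] ac_simps)
  then have tail: "(\<lambda>n. a (n + Suc m)) sums (f u - (\<Sum>j\<le>m. a j))"
    using sums_split_initial_segment[of a "f u" "Suc m"] by (simp add: lessThan_Suc_atMost)
  have "0 \<le> B"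
    using r by (intro order_trans[OF norm_ge_zero bound[of 0]]) simp
  have a_le: "norm (a n) \<le> B / r ^ n" for n
  proof -
    have "norm (a n) = norm ((deriv ^^ n) f 0 / fact n) * norm u ^ n"
      by (simp only: a_def norm_mult norm_power)
    also have "\<dots> \<le> B / r ^ n * 1"
      using Taylor_coefficient_bound[OF hol _ r(2) bound, of n] u r \<open>0 \<le> B\<close>
      by (intro mult_mono) (auto simp: power_le_one)
    finally show ?thesis by simp
  qed
  have geometric: "(\<lambda>n. B / r ^ (n + Suc m)) sums (B / (r ^ m * (r - 1)))"
  proof -
    have "(\<lambda>n. (1 / r) ^ n) sums (1 / (1 - 1 / r))"
      by (rule geometric_sums) (use r in auto)
    then have "(\<lambda>n. B / r ^ Suc m * (1 / r) ^ n) sums (B / r ^ Suc m * (1 / (1 - 1 / r)))"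
      by (rule sums_mult)
    also have "(\<lambda>n. B / r ^ Suc m * (1 / r) ^ n) = (\<lambda>n. B / r ^ (n + Suc m))"
      by (simp add: fun_eq_iff power_add power_one_over mult_ac)
    also have "B / r ^ Suc m * (1 / (1 - 1 / r)) = B / (r ^ m * (r - 1))"
      using r by (simp add: field_simps)
    finally show ?thesis .
  qed
  show ?thesis
    using norm_suminf_le[OF a_le sums_summable[OF geometric]] sums_unique[OF tail]
      sums_unique[OF geometric] by (simp add: a_def)
qed

lemma borel_measurable_higher_deriv:
  fixes f :: "'a \<Rightarrow> complex \<Rightarrow> complex"
  assumes hol: "\<And>x. x \<in> space M \<Longrightarrow> f x holomorphic_on ball 0 R"
    and meas: "\<And>z. z \<in> ball 0 R \<Longrightarrow> (\<lambda>x. f x z) \<in> borel_measurable M"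
    and z: "z \<in> ball 0 R"
  shows "(\<lambda>x. (deriv ^^ j) (f x) z) \<in> borel_measurable M"
  using z
proof (induction j arbitrary: z)
  case 0
  then show ?case using meas by simp
next
  case (Suc j)
  define h where "h i = complex_of_real ((R - norm z) / 2 * (1 / 2) ^ i)" for i :: nat
  have "0 < R - norm z"
    using Suc.prems by simp
  then have h_ne: "h i \<noteq> 0" for i
    by (simp add: h_def)
  have z_h: "z + h i \<in> ball 0 R" for i
  proof -
    have "norm (h i) = (R - norm z) / 2 * (1 / 2) ^ i"
      unfolding h_def norm_of_real using \<open>0 < R - norm z\<close> by simp
    also have "\<dots> \<le> (R - norm z) / 2"
      using \<open>0 < R - norm z\<close> by (intro mult_left_le) (auto simp: power_le_one)
    also have "\<dots> < R - norm z"
      using \<open>0 < R - norm z\<close> by simp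
    finally show ?thesis
      using norm_triangle_ineq[of z "h i"] by simp
  qed
  have "(\<lambda>i. (R - norm z) / 2 * (1 / 2) ^ i) \<longlonglongrightarrow> 0"
    by (intro tendsto_mult_right_zero LIMSEQ_power_zero) simp
  from tendsto_of_real[OF this, where 'a=complex] have "h \<longlonglongrightarrow> 0"
    unfolding h_def by (simp only: of_real_0)
  have z_h_lim: "filterlim (\<lambda>i. z + h i) (at z) sequentially"
    using tendsto_add[OF tendsto_const \<open>h \<longlonglongrightarrow> 0\<close>, of z] h_ne by (intro filterlim_atI) auto
  show ?case
  proof (rule borel_measurable_LIMSEQ_metric)
    show "(\<lambda>x. ((deriv ^^ j) (f x) (z + h i) - (deriv ^^ j) (f x) z) / h i) \<in> borel_measurable M" for i
      using Suc.IH[OF z_h] Suc.IH[OF Suc.prems] by measurable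
  next
    fix x assume "x \<in> space M"
    have "(deriv ^^ j) (f x) holomorphic_on ball 0 R"
      using hol[OF \<open>x \<in> space M\<close>] by (rule holomorphic_higher_deriv) auto
    then have "((deriv ^^ j) (f x) has_field_derivative (deriv ^^ Suc j) (f x) z) (at z)"
      using Suc.prems by (auto intro: holomorphic_derivI)
    then have "((\<lambda>w. ((deriv ^^ j) (f x) w - (deriv ^^ j) (f x) z) / (w - z))
                 \<longlongrightarrow> (deriv ^^ Suc j) (f x) z) (at z)"
      by (simp add: has_field_derivative_iff)
    from filterlim_compose[OF this z_h_lim]
    show "(\<lambda>i. ((deriv ^^ j) (f x) (z + h i) - (deriv ^^ j) (f x) z) / h i)
            \<longlonglongrightarrow> (deriv ^^ Suc j) (f x) z"
      by (simp add: o_def)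
  qed
qed

(* The library's integral_abs_bound_integral needlessly requires a Euclidean domain. *)
lemma abs_integral_le_integral:
  fixes f g :: "'a \<Rightarrow> real"
  assumes "integrable M f" "integrable M g" "\<And>x. x \<in> space M \<Longrightarrow> \<bar>f x\<bar> \<le> g x"
  shows "\<bar>integral\<^sup>L M f\<bar> \<le> integral\<^sup>L M g"
proof -
  have "\<bar>integral\<^sup>L M f\<bar> \<le> (LINT x|M. \<bar>f x\<bar>)"
    by (rule integral_abs_bound)
  also have "\<dots> \<le> integral\<^sup>L M g"
    using assms by (intro integral_mono) auto
  finally show ?thesis .
qed

lemma integrable_Re_Taylor_coefficient:
  fixes f :: "'a \<Rightarrow> complex \<Rightarrow> complex" and h :: "'a \<Rightarrow> real"
  assumes hol: "\<And>x. x \<in> space M \<Longrightarrow> f x holomorphic_on ball 0 R" and r: "0 < r" "r < R"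
    and meas: "\<And>z. z \<in> ball 0 R \<Longrightarrow> (\<lambda>x. f x z) \<in> borel_measurable M"
    and bound: "\<And>x z. x \<in> space M \<Longrightarrow> norm z \<le> r \<Longrightarrow> norm (f x z) \<le> h x"
    and h: "integrable M h"
  shows "integrable M (\<lambda>x. Re ((deriv ^^ j) (f x) 0 / fact j))"
proof (rule Bochner_Integration.integrable_bound)
  show "integrable M (\<lambda>x. h x / r ^ j)"
    using h by simp
  have "(\<lambda>x. (deriv ^^ j) (f x) 0) \<in> borel_measurable M"
    by (rule borel_measurable_higher_deriv[OF hol meas]) (use r in auto)
  then show "(\<lambda>x. Re ((deriv ^^ j) (f x) 0 / fact j)) \<in> borel_measurable M"
    by measurable
  show "AE x in M. norm (Re ((deriv ^^ j) (f x) 0 / fact j)) \<le> norm (h x / r ^ j)"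
  proof (rule AE_I2)
    fix x assume "x \<in> space M"
    with Taylor_coefficient_bound[OF hol[OF this] r(1,2) bound[OF this], of j]
    show "norm (Re ((deriv ^^ j) (f x) 0 / fact j)) \<le> norm (h x / r ^ j)"
      using abs_Re_le_cmod by (smt (verit) real_norm_def)
  qed
qed

lemma integral_Re_holomorphic_family_Taylor:
  fixes f :: "'a \<Rightarrow> complex \<Rightarrow> complex" and h :: "'a \<Rightarrow> real"
  assumes hol: "\<And>x. x \<in> space M \<Longrightarrow> f x holomorphic_on ball 0 R" and r: "1 < r" "r < R"
    and meas: "\<And>z. z \<in> ball 0 R \<Longrightarrow> (\<lambda>x. f x z) \<in> borel_measurable M"
    and bound: "\<And>x z. x \<in> space M \<Longrightarrow> norm z \<le> r \<Longrightarrow> norm (f x z) \<le> h x"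
    and h: "integrable M h"
  defines "c j \<equiv> LINT x|M. Re ((deriv ^^ j) (f x) 0 / fact j)"
  shows "\<bar>c j\<bar> \<le> (LINT x|M. h x) / r ^ j"
    and "\<bar>u\<bar> \<le> 1 \<Longrightarrow>
      \<bar>(LINT x|M. Re (f x (of_real u))) - (\<Sum>j\<le>m. c j * u ^ j)\<bar> \<le> (LINT x|M. h x) / (r ^ m * (r - 1))"
proof -
  define a where "a x j = (deriv ^^ j) (f x) 0 / fact j" for x j
  have a_int: "integrable M (\<lambda>x. Re (a x j))" for j
    unfolding a_def using r by (intro integrable_Re_Taylor_coefficient[OF hol _ _ meas bound h]) auto
  have "\<bar>c j\<bar> \<le> (LINT x|M. h x / r ^ j)"
    unfolding c_def
  proof (rule abs_integral_le_integral)
    show "\<bar>Re ((deriv ^^ j) (f x) 0 / fact j)\<bar> \<le> h x / r ^ j" if "x \<in> space M" for x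
      using abs_Re_le_cmod Taylor_coefficient_bound[OF hol[OF that] _ r(2) bound[OF that], of j] r
      by (smt (verit))
  qed (use a_int h in \<open>simp_all add: a_def\<close>)
  then show "\<bar>c j\<bar> \<le> (LINT x|M. h x) / r ^ j"
    by simp
  assume u: "\<bar>u\<bar> \<le> 1"
  have f_int: "integrable M (\<lambda>x. Re (f x (of_real u)))"
  proof (rule Bochner_Integration.integrable_bound[OF h])
    show "(\<lambda>x. Re (f x (of_real u))) \<in> borel_measurable M"
      using meas[of "of_real u"] u r by simp
    show "AE x in M. norm (Re (f x (of_real u))) \<le> norm (h x)"
      using bound u r abs_Re_le_cmod by (intro AE_I2) (smt (verit) norm_of_real real_norm_def)
  qed
  define E where "E x = Re (f x (of_real u)) - (\<Sum>j\<le>m. Re (a x j) * u ^ j)" for x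
  have E_eq: "E x = Re (f x (of_real u) - (\<Sum>j\<le>m. a x j * of_real u ^ j))" for x
    by (simp add: E_def flip: of_real_power)
  have "(LINT x|M. Re (f x (of_real u))) - (\<Sum>j\<le>m. c j * u ^ j) = (LINT x|M. E x)"
    using f_int a_int by (simp add: E_def c_def a_def integral_sum)
  also have "\<bar>\<dots>\<bar> \<le> (LINT x|M. h x / (r ^ m * (r - 1)))"
  proof (rule abs_integral_le_integral)
    show "\<bar>E x\<bar> \<le> h x / (r ^ m * (r - 1))" if "x \<in> space M" for x
      using abs_Re_le_cmod Taylor_remainder_bound[OF hol[OF that] r bound[OF that], of "of_real u" m] u
      unfolding E_eq a_def by (smt (verit) norm_of_real)
  qed (use f_int a_int h in \<open>simp_all add: E_def[abs_def]\<close>)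
  finally show "\<bar>(LINT x|M. Re (f x (of_real u))) - (\<Sum>j\<le>m. c j * u ^ j)\<bar> \<le> (LINT x|M. h x) / (r ^ m * (r - 1))"
    by simp
qed

section \<open>The Gamma kernel\<close>

definition gamma_kernel :: "real \<Rightarrow> real \<Rightarrow> complex \<Rightarrow> complex" where
  "gamma_kernel \<kappa> \<theta> z =
     of_real (\<theta> powr (\<kappa> - 1) / Gamma \<kappa>) * z powr of_real (- \<kappa>) * exp (- of_real \<theta> * (1 - z) / z)"

lemma gamma_kernel_holomorphic: "gamma_kernel \<kappa> \<theta> holomorphic_on {z. 0 < Re z}"
proof -
  have "z \<notin> \<real>\<^sub>\<le>\<^sub>0" "z \<noteq> 0" if "0 < Re z" for z
    using that by (auto simp: complex_nonpos_Reals_iff)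
  then show ?thesis
    unfolding gamma_kernel_def by (intro holomorphic_intros) auto
qed

lemma borel_measurable_gamma_kernel [measurable]: "(\<lambda>\<theta>. gamma_kernel \<kappa> \<theta> z) \<in> borel_measurable borel"
  unfolding gamma_kernel_def by measurable

lemma gamma_kernel_of_real:
  assumes "0 < z"
  shows "gamma_kernel \<kappa> \<theta> (of_real z) =
           of_real (\<theta> powr (\<kappa> - 1) / Gamma \<kappa> * z powr (- \<kappa>) * exp (- \<theta> * (1 - z) / z))"
proof -
  have "exp (- of_real \<theta> * (1 - of_real z) / of_real z) = complex_of_real (exp (- \<theta> * (1 - z) / z))"
    by (simp flip: exp_of_real)
  then show ?thesis
    using powr_of_real[of z "- \<kappa>"] assms by (simp add: gamma_kernel_def)
qed

lemma R_psi_eq_integral_gamma_kernel: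
  assumes "0 < z" "z < 1"
  shows "R_psi \<kappa> \<psi> z = (LINT \<theta>|lborel. indicator {0..} \<theta> * \<psi> \<theta> * Re (gamma_kernel \<kappa> \<theta> (of_real z)))"
proof -
  have powr: "(1 - z) powr (- \<kappa>) * ((1 - z) / z) powr \<kappa> = z powr (- \<kappa>)"
    using assms by (simp add: powr_divide powr_minus field_simps)
  have "R_psi \<kappa> \<psi> z = (LINT \<theta>|lborel. (1 - z) powr (- \<kappa>) * (indicator {0..} \<theta> *
          (\<psi> \<theta> * (\<theta> powr (\<kappa> - 1) / Gamma \<kappa>) * ((1 - z) / z) powr \<kappa> * exp (- \<theta> * (1 - z) / z))))"
    unfolding R_psi_def T_psi_def set_lebesgue_integral_def by simp
  also have "\<dots> = (LINT \<theta>|lborel. indicator {0..} \<theta> * \<psi> \<theta> *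
          (\<theta> powr (\<kappa> - 1) / Gamma \<kappa> * ((1 - z) powr (- \<kappa>) * ((1 - z) / z) powr \<kappa>) * exp (- \<theta> * (1 - z) / z)))"
    by (simp add: mult_ac)
  also have "\<dots> = (LINT \<theta>|lborel. indicator {0..} \<theta> * \<psi> \<theta> * Re (gamma_kernel \<kappa> \<theta> (of_real z)))"
    unfolding powr gamma_kernel_of_real[OF assms(1)] by simp
  finally show ?thesis .
qed

lemma half_disc_bounds:
  fixes z :: complex
  assumes z: "norm (z - 1/2) \<le> s" and s: "s < 1/2"
  shows "1/2 - s \<le> norm z" and "1 + (1/4 - s\<^sup>2) \<le> Re (1 / z)"
proof -
  show "1/2 - s \<le> norm z"
    using z norm_triangle_ineq2[of "1/2" z] by (simp add: norm_minus_commute)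
  have "norm z \<le> 1"
    using z s norm_triangle_ineq[of "z - 1/2" "1/2"] by simp
  have "0 \<le> s"
    using z norm_ge_zero order_trans by blast
  then have "s\<^sup>2 < (1/2)\<^sup>2"
    using s by (intro power_strict_mono) auto
  then have "0 < 1/4 - s\<^sup>2"
    by (simp add: power_divide)
  have "(norm (z - 1/2))\<^sup>2 = (norm z)\<^sup>2 - Re z + 1/4"
    unfolding cmod_power2 by (simp add: power2_eq_square algebra_simps)
  moreover have "(norm (z - 1/2))\<^sup>2 \<le> s\<^sup>2"
    using z by (simp add: power_mono)
  ultimately have Re_z: "(norm z)\<^sup>2 + (1/4 - s\<^sup>2) \<le> Re z"
    by linarith
  have "0 < norm z"
    using \<open>1/2 - s \<le> norm z\<close> s by linarith
  have "(1/4 - s\<^sup>2) * (norm z)\<^sup>2 \<le> 1/4 - s\<^sup>2"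
    using \<open>norm z \<le> 1\<close> \<open>0 < 1/4 - s\<^sup>2\<close> by (intro mult_left_le) (auto simp: power_le_one)
  then have "(1 + (1/4 - s\<^sup>2)) * (norm z)\<^sup>2 \<le> (norm z)\<^sup>2 + (1/4 - s\<^sup>2)"
    by (simp add: algebra_simps)
  also have "\<dots> \<le> Re (1 / z) * (norm z)\<^sup>2"
    using Re_z \<open>0 < norm z\<close> by (simp add: Re_divide')
  finally show "1 + (1/4 - s\<^sup>2) \<le> Re (1 / z)"
    using \<open>0 < norm z\<close> by simp
qed

lemma set_integrable_powr_exp:
  assumes "0 < \<kappa>" "0 < \<delta>"
  shows "set_integrable lborel {0..} (\<lambda>\<theta>::real. \<theta> powr (\<kappa> - 1) * exp (- \<delta> * \<theta>))"
proof -
  have powr: "complex_of_real t powr (of_real \<kappa> - 1) = of_real (t powr (\<kappa> - 1))" if "0 < t" for t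
    using powr_of_real[of t "\<kappa> - 1"] that by simp
  have "(\<lambda>t. complex_of_real t powr (of_real \<kappa> - 1) / of_real (exp (\<delta> * t))) absolutely_integrable_on {0<..}"
    using absolutely_integrable_Gamma_integral[of "of_real \<kappa>" \<delta>] assms by simp
  then have "integrable lebesgue (\<lambda>t. Re (indicator {0<..} t *\<^sub>R
               (complex_of_real t powr (of_real \<kappa> - 1) / of_real (exp (\<delta> * t)))))"
    unfolding set_integrable_def by (rule integrable_Re)
  also have "(\<lambda>t. Re (indicator {0<..} t *\<^sub>R
               (complex_of_real t powr (of_real \<kappa> - 1) / of_real (exp (\<delta> * t)))))
           = (\<lambda>t. indicator {0..} t * (t powr (\<kappa> - 1) * exp (- \<delta> * t)))"
    using powr by (auto simp: fun_eq_iff indicator_def exp_minus field_simps)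
  finally show ?thesis
    unfolding set_integrable_def by (subst (asm) integrable_completion) auto
qed

definition gamma_majorant :: "real \<Rightarrow> real \<Rightarrow> real \<Rightarrow> real" where
  "gamma_majorant \<kappa> s \<theta> =
     indicator {0..} \<theta> * (\<theta> powr (\<kappa> - 1) / Gamma \<kappa> * (1/2 - s) powr (- \<kappa>) * exp (- (1/4 - s\<^sup>2) * \<theta>))"

lemma integrable_gamma_majorant:
  assumes "0 < \<kappa>" "0 \<le> s" "s < 1/2"
  shows "integrable lborel (gamma_majorant \<kappa> s)"
proof -
  have "s\<^sup>2 < (1/2)\<^sup>2"
    using assms by (intro power_strict_mono) auto
  then have "0 < 1/4 - s\<^sup>2"
    by (simp add: power_divide)
  from set_integrable_powr_exp[OF assms(1) this]
  have "integrable lborel (\<lambda>\<theta>. (1/2 - s) powr (- \<kappa>) / Gamma \<kappa> *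
          (indicator {0..} \<theta> * (\<theta> powr (\<kappa> - 1) * exp (- (1/4 - s\<^sup>2) * \<theta>))))"
    unfolding set_integrable_def
    by (intro integrable_mult_right) simp
  also have "(\<lambda>\<theta>. (1/2 - s) powr (- \<kappa>) / Gamma \<kappa> *
          (indicator {0..} \<theta> * (\<theta> powr (\<kappa> - 1) * exp (- (1/4 - s\<^sup>2) * \<theta>)))) = gamma_majorant \<kappa> s"
    by (simp add: fun_eq_iff gamma_majorant_def)
  finally show ?thesis .
qed

lemma norm_gamma_kernel_le:
  assumes "0 < \<kappa>" "0 \<le> \<theta>" "norm (z - 1/2) \<le> s" "s < 1/2"
  shows "norm (gamma_kernel \<kappa> \<theta> z) \<le> gamma_majorant \<kappa> s \<theta>"
proof -
  note z = half_disc_bounds[OF assms(3,4)]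
  have "0 < norm z"
    using z(1) assms(4) by linarith
  have "norm (z powr of_real (- \<kappa>)) = norm z powr (- \<kappa>)"
    by (simp add: norm_powr_real_powr')
  also have "\<dots> \<le> (1/2 - s) powr (- \<kappa>)"
    using z(1) assms(1,4) by (intro powr_mono2') auto
  finally have pow: "norm (z powr of_real (- \<kappa>)) \<le> (1/2 - s) powr (- \<kappa>)" .
  have "- of_real \<theta> * (1 - z) / z = of_real \<theta> - of_real \<theta> * (1 / z)"
    using \<open>0 < norm z\<close> by (simp add: field_simps)
  then have "Re (- of_real \<theta> * (1 - z) / z) = \<theta> - \<theta> * Re (1 / z)"
    by (simp add: Re_divide)
  also have "\<dots> \<le> - (1/4 - s\<^sup>2) * \<theta>"
    using mult_left_mono[OF z(2) assms(2)] by (simp add: algebra_simps)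
  finally have exp: "norm (exp (- of_real \<theta> * (1 - z) / z)) \<le> exp (- (1/4 - s\<^sup>2) * \<theta>)"
    by simp
  have "gamma_majorant \<kappa> s \<theta>
      = \<theta> powr (\<kappa> - 1) / Gamma \<kappa> * (1/2 - s) powr (- \<kappa>) * exp (- (1/4 - s\<^sup>2) * \<theta>)"
    using assms(2) by (simp add: gamma_majorant_def)
  then show ?thesis
    unfolding gamma_kernel_def norm_mult norm_of_real
    using exp pow Gamma_real_pos[OF assms(1)] assms(2)
    by (simp only:) (intro mult_mono; simp)
qed

lemma norm_weighted_gamma_kernel_le:
  assumes "\<bar>w\<bar> \<le> indicator {0..} \<theta>" "0 < \<kappa>" "norm (z - 1/2) \<le> s" "s < 1/2"
  shows "norm (of_real w * gamma_kernel \<kappa> \<theta> z) \<le> gamma_majorant \<kappa> s \<theta>"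
proof (cases "0 \<le> \<theta>")
  case True
  have "norm (of_real w * gamma_kernel \<kappa> \<theta> z) \<le> 1 * norm (gamma_kernel \<kappa> \<theta> z)"
    using assms(1) True unfolding norm_mult by (intro mult_right_mono) auto
  also have "\<dots> \<le> gamma_majorant \<kappa> s \<theta>"
    using norm_gamma_kernel_le[OF assms(2) True assms(3,4)] by simp
  finally show ?thesis .
next
  case False
  then show ?thesis
    using assms(1) by (simp add: gamma_majorant_def)
qed

lemma norm_affine_sub_half_le:
  assumes "0 \<le> \<Delta>"
  shows "norm (of_real c + of_real \<Delta> * u - 1/2) \<le> \<bar>c - 1/2\<bar> + \<Delta> * norm (u :: complex)"
proof -
  have "of_real c + of_real \<Delta> * u - 1/2 = of_real (c - 1/2) + of_real \<Delta> * u"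
    by simp
  also have "norm \<dots> \<le> norm (of_real (c - 1/2) :: complex) + norm (of_real \<Delta> * u)"
    by (rule norm_triangle_ineq)
  also have "\<dots> = \<bar>c - 1/2\<bar> + \<Delta> * norm u"
    using assms by (simp only: norm_mult norm_of_real abs_of_nonneg)
  finally show ?thesis .
qed

lemma holomorphic_gamma_kernel_affine:
  assumes "0 < \<Delta>"
  shows "(\<lambda>u. gamma_kernel \<kappa> \<theta> (of_real c + of_real \<Delta> * u)) holomorphic_on ball 0 ((1/2 - \<bar>c - 1/2\<bar>) / \<Delta>)"
proof (rule holomorphic_on_compose_gen[OF _ gamma_kernel_holomorphic, unfolded o_def])
  show "(\<lambda>u. of_real c + of_real \<Delta> * u) holomorphic_on ball 0 ((1/2 - \<bar>c - 1/2\<bar>) / \<Delta>)"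
    by (intro holomorphic_intros)
  show "(\<lambda>u. of_real c + of_real \<Delta> * u) ` ball 0 ((1/2 - \<bar>c - 1/2\<bar>) / \<Delta>) \<subseteq> {z. 0 < Re z}"
  proof clarify
    fix u :: complex
    assume "u \<in> ball 0 ((1/2 - \<bar>c - 1/2\<bar>) / \<Delta>)"
    then have "norm (of_real c + of_real \<Delta> * u - 1/2) < 1/2"
      using norm_affine_sub_half_le[of \<Delta> c u] assms by (simp add: field_simps)
    then show "0 < Re (of_real c + of_real \<Delta> * u)"
      using abs_Re_le_cmod[of "of_real c + of_real \<Delta> * u - 1/2"] by simp
  qed
qed

lemma integral_gamma_kernel_Taylor:
  fixes c \<Delta> r \<kappa> :: real
  assumes \<kappa>: "0 < \<kappa>" and \<Delta>: "0 < \<Delta>" and r: "1 < r" and disc: "\<bar>c - 1/2\<bar> + \<Delta> * r < 1/2"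
  obtains H where "0 \<le> H"
    and "\<And>F m. F \<in> borel_measurable borel \<Longrightarrow> (\<And>\<theta>. \<bar>F \<theta>\<bar> \<le> indicator {0..} \<theta>) \<Longrightarrow>
           \<exists>d. (\<forall>u\<in>{-1..1}. \<bar>(LINT \<theta>|lborel. F \<theta> * Re (gamma_kernel \<kappa> \<theta> (of_real (c + \<Delta> * u))))
                                - (\<Sum>j\<le>m. d j * u ^ j)\<bar> \<le> H / (r ^ m * (r - 1)))
             \<and> (\<forall>j. \<bar>d j\<bar> \<le> H / r ^ j)"
proof -
  define s where "s = \<bar>c - 1/2\<bar> + \<Delta> * r"
  define R where "R = (1/2 - \<bar>c - 1/2\<bar>) / \<Delta>"
  define Z where "Z u = of_real c + of_real \<Delta> * (u :: complex)" for u
  have "r < R"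
    using disc \<Delta> by (simp add: R_def field_simps)
  have Z_disc: "norm (Z u - 1/2) \<le> s" if "norm u \<le> r" for u
    using norm_affine_sub_half_le[of \<Delta> c u] mult_left_mono[OF that, of \<Delta>] \<Delta>
    unfolding Z_def s_def by linarith
  have "0 \<le> s" "s < 1/2"
    using disc \<Delta> r by (simp_all add: s_def)
  show ?thesis
  proof (rule that)
    show "0 \<le> integral\<^sup>L lborel (gamma_majorant \<kappa> s)"
      using Gamma_real_pos[OF \<kappa>] by (simp add: gamma_majorant_def)
    fix F :: "real \<Rightarrow> real" and m :: nat
    assume F_meas: "F \<in> borel_measurable borel" and F_le: "\<And>\<theta>. \<bar>F \<theta>\<bar> \<le> indicator {0..} \<theta>"
    define f where "f \<theta> u = of_real (F \<theta>) * gamma_kernel \<kappa> \<theta> (Z u)" for \<theta> u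
    have hol: "f \<theta> holomorphic_on ball 0 R" for \<theta>
      using holomorphic_gamma_kernel_affine[OF \<Delta>, of \<kappa> \<theta> c]
      unfolding f_def Z_def R_def by (intro holomorphic_intros)
    have meas: "(\<lambda>\<theta>. f \<theta> u) \<in> borel_measurable lborel" for u
      using F_meas unfolding f_def by measurable
    have bound: "norm (f \<theta> u) \<le> gamma_majorant \<kappa> s \<theta>" if "norm u \<le> r" for \<theta> u
      unfolding f_def using F_le \<kappa> Z_disc[OF that] \<open>s < 1/2\<close> by (rule norm_weighted_gamma_kernel_le)
    have "Re (f \<theta> (of_real u)) = F \<theta> * Re (gamma_kernel \<kappa> \<theta> (of_real (c + \<Delta> * u)))" for \<theta> u
      by (simp add: f_def Z_def)
    with integral_Re_holomorphic_family_Taylor[OF hol r \<open>r < R\<close> meas bound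
        integrable_gamma_majorant[OF \<kappa> \<open>0 \<le> s\<close> \<open>s < 1/2\<close>]]
    show "\<exists>d. (\<forall>u\<in>{-1..1}. \<bar>(LINT \<theta>|lborel. F \<theta> * Re (gamma_kernel \<kappa> \<theta> (of_real (c + \<Delta> * u))))
                                - (\<Sum>j\<le>m. d j * u ^ j)\<bar> \<le> integral\<^sup>L lborel (gamma_majorant \<kappa> s) / (r ^ m * (r - 1)))
             \<and> (\<forall>j. \<bar>d j\<bar> \<le> integral\<^sup>L lborel (gamma_majorant \<kappa> s) / r ^ j)"
      by (intro exI conjI ballI allI) auto
  qed
qed

section \<open>Polynomial approximation of q_psi\<close>

lemma halfw_pos: "0 < L \<Longrightarrow> L < U \<Longrightarrow> 0 < halfw L U"
  by (simp add: halfw_def endA_def endB_def frac_less2)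

lemma zc_halfw_margin:
  assumes "0 < L" "L < U"
  shows "\<bar>zc L U - 1/2\<bar> + halfw L U < 1/2"
proof -
  have "0 < endA U" "endB L < 1"
    using assms by (simp_all add: endA_def endB_def)
  then show ?thesis
    by (simp add: zc_def halfw_def abs_if field_simps)
qed

lemma Taylor_radius_exists:
  assumes "0 < L" "L < U"
  obtains r where "1 < r" and "\<bar>zc L U - 1/2\<bar> + halfw L U * r < 1/2"
proof
  define e where "e = 1/2 - \<bar>zc L U - 1/2\<bar>"
  have "halfw L U < e" "0 < halfw L U"
    using zc_halfw_margin[OF assms] halfw_pos[OF assms] by (simp_all add: e_def)
  then show "1 < (1 + e / halfw L U) / 2"
    by (simp add: field_simps)
  have "\<bar>zc L U - 1/2\<bar> + halfw L U * ((1 + e / halfw L U) / 2) = \<bar>zc L U - 1/2\<bar> + (halfw L U + e) / 2"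
    using \<open>0 < halfw L U\<close> by (simp add: field_simps)
  also have "\<dots> < \<bar>zc L U - 1/2\<bar> + e"
    using \<open>halfw L U < e\<close> by simp
  also have "\<dots> = 1/2"
    by (simp add: e_def)
  finally show "\<bar>zc L U - 1/2\<bar> + halfw L U * ((1 + e / halfw L U) / 2) < 1/2" .
qed

lemma q_psi_eq_integral_gamma_kernel:
  assumes "0 < L" "L < U" "u \<in> {-1..1}"
  shows "q_psi \<kappa> L U \<psi> u =
           (LINT \<theta>|lborel. indicator {0..} \<theta> * \<psi> \<theta> * Re (gamma_kernel \<kappa> \<theta> (of_real (zc L U + halfw L U * u))))"
proof -
  have "\<bar>zc L U + halfw L U * u - 1/2\<bar> \<le> \<bar>zc L U - 1/2\<bar> + \<bar>halfw L U * u\<bar>"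
    using abs_triangle_ineq[of "zc L U - 1/2" "halfw L U * u"] by simp
  also have "\<bar>halfw L U * u\<bar> \<le> halfw L U"
    using halfw_pos[OF assms(1,2)] assms(3) by (simp add: abs_mult abs_le_iff mult_left_le)
  finally have "\<bar>zc L U + halfw L U * u - 1/2\<bar> < 1/2"
    using zc_halfw_margin[OF assms(1,2)] by simp
  then have "0 < zc L U + halfw L U * u" "zc L U + halfw L U * u < 1"
    by arith+
  then show ?thesis
    unfolding q_psi_def by (rule R_psi_eq_integral_gamma_kernel)
qed

lemma fact_le_power_of_le:
  assumes "j \<le> m"
  shows "fact j \<le> real m ^ j"
proof -
  have "fact j \<le> real (j ^ j)"
    by (rule fact_le_power)
  also have "\<dots> \<le> real m ^ j"
    using power_mono[OF assms, of j] by (simp flip: of_nat_power)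
  finally show ?thesis .
qed

lemma Taylor_constant_bounds:
  fixes H r :: real
  assumes r: "1 < r" and H: "0 \<le> H"
  defines "C \<equiv> H + H / (r - 1) + 1"
  shows "0 < C"
    and "H / (r ^ m * (r - 1)) \<le> C * (1/r) ^ m"
    and "j \<le> m \<Longrightarrow> H / r ^ j \<le> C * real m ^ j / fact j"
proof -
  have "0 \<le> H / (r - 1)"
    using H r by simp
  then show "0 < C"
    using H by (simp add: C_def)
  have "H / (r ^ m * (r - 1)) = H / (r - 1) * (1/r) ^ m"
    by (simp add: power_one_over)
  also have "\<dots> \<le> C * (1/r) ^ m"
    using r H by (intro mult_right_mono) (simp_all add: C_def)
  finally show "H / (r ^ m * (r - 1)) \<le> C * (1/r) ^ m" .
  assume "j \<le> m"
  have "H / r ^ j \<le> H / 1"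
    using r H by (intro divide_left_mono) (auto simp: one_le_power)
  also have "\<dots> \<le> C"
    using \<open>0 \<le> H / (r - 1)\<close> by (simp add: C_def)
  also have "\<dots> \<le> C * (real m ^ j / fact j)"
    using fact_le_power_of_le[OF \<open>j \<le> m\<close>] \<open>0 < C\<close> by (simp add: mult_le_cancel_left1 le_divide_eq)
  finally show "H / r ^ j \<le> C * real m ^ j / fact j"
    by simp
qed

lemma q_psi_polynomial_approx:
  assumes "0 < L" "L < U" "0 < \<kappa>" and r: "1 < r" "\<bar>zc L U - 1/2\<bar> + halfw L U * r < 1/2"
  shows "\<exists>C>0. \<forall>m \<psi>. \<psi> \<in> borel_measurable (restrict_space borel {0..}) \<longrightarrow> (\<forall>\<theta>\<ge>0. \<bar>\<psi> \<theta>\<bar> \<le> 1) \<longrightarrow>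
           (\<exists>d. (\<forall>u\<in>{-1..1}. \<bar>q_psi \<kappa> L U \<psi> u - (\<Sum>j\<le>m. d j * u ^ j)\<bar> \<le> C * (1/r) ^ m) \<and>
                (\<forall>j\<le>m. \<bar>d j\<bar> \<le> C * real m ^ j / fact j))"
proof -
  obtain H where "0 \<le> H" and approx:
    "\<And>F m. F \<in> borel_measurable borel \<Longrightarrow> (\<And>\<theta>. \<bar>F \<theta>\<bar> \<le> indicator {0..} \<theta>) \<Longrightarrow>
       \<exists>d. (\<forall>u\<in>{-1..1}. \<bar>(LINT \<theta>|lborel. F \<theta> * Re (gamma_kernel \<kappa> \<theta> (of_real (zc L U + halfw L U * u))))
                            - (\<Sum>j\<le>m. d j * u ^ j)\<bar> \<le> H / (r ^ m * (r - 1)))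
         \<and> (\<forall>j. \<bar>d j\<bar> \<le> H / r ^ j)"
    using integral_gamma_kernel_Taylor[OF \<open>0 < \<kappa>\<close> halfw_pos[OF assms(1,2)] r] by blast
  note C = Taylor_constant_bounds[OF r(1) \<open>0 \<le> H\<close>]
  show ?thesis
  proof (intro exI[of _ "H + H / (r - 1) + 1"] conjI allI impI)
    show "0 < H + H / (r - 1) + 1"
      by (rule C(1))
    fix m :: nat and \<psi> :: "real \<Rightarrow> real"
    assume "\<psi> \<in> borel_measurable (restrict_space borel {0..})" and "\<forall>\<theta>\<ge>0. \<bar>\<psi> \<theta>\<bar> \<le> 1"
    then have "(\<lambda>\<theta>. indicator {0..} \<theta> * \<psi> \<theta>) \<in> borel_measurable borel"
      and "\<bar>indicator {0..} \<theta> * \<psi> \<theta>\<bar> \<le> indicator {0..} \<theta>" for \<theta>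
      by (auto simp: borel_measurable_restrict_space_iff indicator_def)
    from approx[OF this, where m=m]
    have "\<exists>d. (\<forall>u\<in>{-1..1}. \<bar>q_psi \<kappa> L U \<psi> u - (\<Sum>j\<le>m. d j * u ^ j)\<bar> \<le> H / (r ^ m * (r - 1)))
              \<and> (\<forall>j. \<bar>d j\<bar> \<le> H / r ^ j)"
      by (simp add: q_psi_eq_integral_gamma_kernel[OF assms(1,2)])
    then show "\<exists>d. (\<forall>u\<in>{-1..1}. \<bar>q_psi \<kappa> L U \<psi> u - (\<Sum>j\<le>m. d j * u ^ j)\<bar> \<le> (H + H / (r - 1) + 1) * (1/r) ^ m)
              \<and> (\<forall>j\<le>m. \<bar>d j\<bar> \<le> (H + H / (r - 1) + 1) * real m ^ j / fact j)"
      using C(2)[of m] C(3) by (meson order_trans)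
  qed
qed

theorem lemmaD4:
  fixes L U :: real
  assumes "0 < L" and "L < U"
  shows "\<exists>\<rho>. 0 < \<rho> \<and> \<rho> < 1 \<and>
    (\<forall>\<kappa>::real. \<kappa> > 0 \<longrightarrow>
      (\<exists>C>0. \<forall>m::nat. m \<ge> 2 \<longrightarrow>
        (\<forall>\<psi>::real \<Rightarrow> real. \<psi> \<in> borel_measurable (restrict_space borel {0..}) \<longrightarrow>
           (\<forall>\<theta>\<ge>0. \<bar>\<psi> \<theta>\<bar> \<le> 1) \<longrightarrow>
           (\<exists>d::nat \<Rightarrow> real.
              (\<forall>u\<in>{-1..1}. \<bar>q_psi \<kappa> L U \<psi> u - (\<Sum>j\<le>m. d j * u ^ j)\<bar> \<le> C * \<rho> ^ m) \<and>
              (\<forall>j\<le>m. \<bar>d j\<bar> \<le> C * real m ^ j / fact j)))))"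
proof -
  obtain r where r: "1 < r" "\<bar>zc L U - 1/2\<bar> + halfw L U * r < 1/2"
    using Taylor_radius_exists[OF assms] by blast
  show ?thesis
  proof (rule exI[of _ "1/r"], intro conjI allI impI)
    show "0 < 1/r" "1/r < 1"
      using r(1) by auto
    fix \<kappa> :: real
    assume "0 < \<kappa>"
    \<comment> \<open>The approximation holds for every m.\<close>
    from q_psi_polynomial_approx[OF assms this r]
    show "\<exists>C>0. \<forall>m::nat. m \<ge> 2 \<longrightarrow>
        (\<forall>\<psi>::real \<Rightarrow> real. \<psi> \<in> borel_measurable (restrict_space borel {0..}) \<longrightarrow>
           (\<forall>\<theta>\<ge>0. \<bar>\<psi> \<theta>\<bar> \<le> 1) \<longrightarrow>
           (\<exists>d::nat \<Rightarrow> real.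
              (\<forall>u\<in>{-1..1}. \<bar>q_psi \<kappa> L U \<psi> u - (\<Sum>j\<le>m. d j * u ^ j)\<bar> \<le> C * (1/r) ^ m) \<and>
              (\<forall>j\<le>m. \<bar>d j\<bar> \<le> C * real m ^ j / fact j)))"
      by blast
  qed
qed

end
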